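(* Let $\Gamma$ be a single-player extensive-form game with no chance nodes and no absentmindedness. Then $\mathrm{VoR}^{\mathrm{opt}}(\Gamma)=1$. Further, both $\Gamma$ and $\mathrm{pr}_1(\Gamma)$ admit a pure optimal strategy.
   Context: A single-player extensive-form game consists of a finite rooted tree (nodes $\mathcal H$, leaves $\mathcal Z$, actions $A_h$), nonterminal nodes belonging to Player 1 or to chance, utility $u_1:\mathcal Z\to\mathbb R_{\ge0}$, and a partition of Player 1's nodes into infosets with common action sets $A_I$. For a node $h$, $\mathrm{obs}(h)=(i_k,I_k,a_k)_k$ lists the player, infoset and action taken along the root-to-$h$ path (excluding $h$); $\mathrm{obs}_1(h)$ is its restriction to Player 1. The game has absentmindedness if some infoset appears more than once among the $I_k$ of $\mathrm{obs}(h)$ for some $h$. $\mathrm{pr}_1(\Gamma)$ has the same tree and utilities, with each infoset partitioned into classes of $h\sim h'\iff\mathrm{obs}_1(h)=\mathrm{obs}_1(h')$. A behavioral strategy $\pi$ assigns $\pi(\cdot\mid I)\in\Delta(A_I)$ to each infoset; it is pure if each is a point mass. $U_1(\pi)$ is the expected utility; an optimal strategy maximizes $U_1$, with value $u_1(\mathrm{opt}(\cdot))$. $\mathrm{VoR}^{\mathrm{opt}}(\Gamma)=u_1(\mathrm{opt}(\mathrm{pr}_1(\Gamma)))/u_1(\mathrm{opt}(\Gamma))$. *)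

theory Defs
  imports Complex_Main
begin

text \<open>Nodes are histories (lists of actions)
  from the root; the tree is the finite, prefix-closed set of nodes containing the root [].\<close>

record ('a, 'i) efg =
  nodes     :: "'a list set"
  is_chance :: "'a list \<Rightarrow> bool"
  chance_pr :: "'a list \<Rightarrow> 'a \<Rightarrow> real"
  infoset   :: "'a list \<Rightarrow> 'i"
  util      :: "'a list \<Rightarrow> real"

definition acts :: "('a, 'i) efg \<Rightarrow> 'a list \<Rightarrow> 'a set" where
  "acts G h = {a. h @ [a] \<in> nodes G}"

definition leaves :: "('a, 'i) efg \<Rightarrow> 'a list set" where
  "leaves G = {z \<in> nodes G. acts G z = {}}"

definition p1_nodes :: "('a, 'i) efg \<Rightarrow> 'a list set" where
  "p1_nodes G = {h \<in> nodes G. acts G h \<noteq> {} \<and> \<not> is_chance G h}"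

definition chance_nodes :: "('a, 'i) efg \<Rightarrow> 'a list set" where
  "chance_nodes G = {h \<in> nodes G. acts G h \<noteq> {} \<and> is_chance G h}"

definition wf_game :: "('a, 'i) efg \<Rightarrow> bool" where
  "wf_game G \<longleftrightarrow>
     finite (nodes G) \<and> [] \<in> nodes G \<and>
     (\<forall>h a. h @ [a] \<in> nodes G \<longrightarrow> h \<in> nodes G) \<and>
     (\<forall>z \<in> leaves G. util G z \<ge> 0) \<and>
     (\<forall>h \<in> chance_nodes G. (\<forall>a \<in> acts G h. chance_pr G h a \<ge> 0) \<and>
                           (\<Sum>a \<in> acts G h. chance_pr G h a) = 1) \<and>
     (\<forall>h \<in> p1_nodes G. \<forall>h' \<in> p1_nodes G. infoset G h = infoset G h' \<longrightarrow> acts G h = acts G h')"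

definition behavioral :: "('a, 'i) efg \<Rightarrow> ('i \<Rightarrow> 'a \<Rightarrow> real) \<Rightarrow> bool" where
  "behavioral G \<pi> \<longleftrightarrow>
     (\<forall>h \<in> p1_nodes G. (\<forall>a \<in> acts G h. \<pi> (infoset G h) a \<ge> 0) \<and>
                      (\<Sum>a \<in> acts G h. \<pi> (infoset G h) a) = 1)"

definition pure :: "('a, 'i) efg \<Rightarrow> ('i \<Rightarrow> 'a \<Rightarrow> real) \<Rightarrow> bool" where
  "pure G \<pi> \<longleftrightarrow> behavioral G \<pi> \<and>
     (\<forall>h \<in> p1_nodes G. \<exists>a \<in> acts G h. \<forall>b \<in> acts G h. \<pi> (infoset G h) b = (if b = a then 1 else 0))"

definition reach :: "('a, 'i) efg \<Rightarrow> ('i \<Rightarrow> 'a \<Rightarrow> real) \<Rightarrow> 'a list \<Rightarrow> real" where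
  "reach G \<pi> z = (\<Prod>k < length z.
      if is_chance G (take k z) then chance_pr G (take k z) (z ! k)
      else \<pi> (infoset G (take k z)) (z ! k))"

definition U1 :: "('a, 'i) efg \<Rightarrow> ('i \<Rightarrow> 'a \<Rightarrow> real) \<Rightarrow> real" where
  "U1 G \<pi> = (\<Sum>z \<in> leaves G. reach G \<pi> z * util G z)"

definition optimal :: "('a, 'i) efg \<Rightarrow> ('i \<Rightarrow> 'a \<Rightarrow> real) \<Rightarrow> bool" where
  "optimal G \<pi> \<longleftrightarrow> behavioral G \<pi> \<and> (\<forall>\<pi>'. behavioral G \<pi>' \<longrightarrow> U1 G \<pi>' \<le> U1 G \<pi>)"

definition opt_val :: "('a, 'i) efg \<Rightarrow> real" where
  "opt_val G = Sup {U1 G \<pi> | \<pi>. behavioral G \<pi>}"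

definition obs1 :: "('a, 'i) efg \<Rightarrow> 'a list \<Rightarrow> ('i \<times> 'a) list" where
  "obs1 G h = map (\<lambda>k. (infoset G (take k h), h ! k))
                  (filter (\<lambda>k. take k h \<in> p1_nodes G) [0..<length h])"

definition no_chance :: "('a, 'i) efg \<Rightarrow> bool" where
  "no_chance G \<longleftrightarrow> chance_nodes G = {}"

definition absentminded :: "('a, 'i) efg \<Rightarrow> bool" where
  "absentminded G \<longleftrightarrow> (\<exists>h \<in> nodes G. \<exists>k l. k < l \<and> l < length h \<and>
      take k h \<in> p1_nodes G \<and> take l h \<in> p1_nodes G \<and>
      infoset G (take k h) = infoset G (take l h))"

text \<open>Perfect-recall refinement: h ~ h' iff same infoset and same obs_1.\<close>
definition pr1 :: "('a, 'i) efg \<Rightarrow> ('a, 'i \<times> ('i \<times> 'a) list) efg" where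
  "pr1 G = \<lparr> nodes = nodes G, is_chance = is_chance G, chance_pr = chance_pr G,
             infoset = (\<lambda>h. (infoset G h, obs1 G h)), util = util G \<rparr>"

definition VoR_opt :: "('a, 'i) efg \<Rightarrow> real" where
  "VoR_opt G = opt_val (pr1 G) / opt_val G"

end

theory Submission
  imports Defs "HOL-Library.Sublist"
begin

(* In any well-formed game the reach probabilities of the leaves form a probability
   distribution, so no behavioral strategy earns more than the best leaf utility. Without
   chance nodes and without absentmindedness the path to a best leaf meets each infoset at
   most once, so a pure strategy can play exactly that path and reach the leaf with
   probability one. Hence the optimal value of such a game is its maximal leaf utility, and
   it is attained by a pure strategy. The refinement pr1 changes only the infoset labels:
   it keeps leaves and utilities and inherits the two hypotheses, so both games have the
   same optimal value. *)

lemma take_in_nodes: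
  assumes "wf_game H" "h \<in> nodes H"
  shows "take n h \<in> nodes H"
  using assms(2)
proof (induction h arbitrary: n rule: rev_induct)
  case (snoc a h)
  then have "h \<in> nodes H" using assms(1) unfolding wf_game_def by blast
  with snoc show ?case by (cases "n \<le> length h") simp_all
qed simp

lemma prefix_in_nodes:
  assumes "wf_game H" "h \<in> nodes H" "prefix p h"
  shows "p \<in> nodes H"
  using take_in_nodes[OF assms(1,2), of "length p"] assms(3)
  by (metis append_eq_conv_conj prefix_def)

lemma nth_in_acts_take:
  assumes "wf_game H" "h \<in> nodes H" "k < length h"
  shows "h ! k \<in> acts H (take k h)"
  using take_in_nodes[OF assms(1,2), of "Suc k"] assms(3)
  unfolding acts_def by (simp add: take_Suc_conv_app_nth)

lemma take_in_p1_nodes: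
  assumes "wf_game H" "no_chance H" "h \<in> nodes H" "k < length h"
  shows "take k h \<in> p1_nodes H"
  using assms take_in_nodes nth_in_acts_take
  unfolding no_chance_def chance_nodes_def p1_nodes_def by blast

lemma finite_acts:
  assumes "wf_game H"
  shows "finite (acts H h)"
proof -
  have "(\<lambda>a. h @ [a]) ` acts H h \<subseteq> nodes H" unfolding acts_def by auto
  then have "finite ((\<lambda>a. h @ [a]) ` acts H h)"
    using assms finite_subset unfolding wf_game_def by blast
  then show ?thesis by (rule finite_imageD) (simp add: inj_on_def)
qed

lemma finite_leaves:
  assumes "wf_game H"
  shows "finite (leaves H)"
  using assms unfolding wf_game_def leaves_def by simp

lemma leaves_nonempty:
  assumes "wf_game H"
  shows "leaves H \<noteq> {}"
proof -
  have fin: "finite (nodes H)" and "[] \<in> nodes H" using assms unfolding wf_game_def by blast+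
  then have "Max (length ` nodes H) \<in> length ` nodes H" by (intro Max_in) auto
  then obtain h where h: "h \<in> nodes H" "length h = Max (length ` nodes H)" by auto
  have "acts H h = {}"
  proof (rule ccontr)
    assume "acts H h \<noteq> {}"
    then obtain a where "h @ [a] \<in> nodes H" unfolding acts_def by blast
    then have "length (h @ [a]) \<le> Max (length ` nodes H)" using fin by (metis Max_ge finite_imageI imageI)
    then show False using h(2) by simp
  qed
  then show ?thesis using h(1) unfolding leaves_def by blast
qed

lemma leaf_prefix_eq:
  assumes "wf_game H" "z \<in> leaves H" "h \<in> nodes H" "prefix z h"
  shows "h = z"
proof (rule ccontr)
  assume "h \<noteq> z"
  with assms(4) obtain a w where "h = z @ a # w" by (metis prefix_def append_Nil2 neq_Nil_conv)
  then have "z @ [a] \<in> nodes H" using prefix_in_nodes[OF assms(1,3)] by simp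
  then show False using assms(2) unfolding leaves_def acts_def by auto
qed

definition move_prob :: "('a, 'i) efg \<Rightarrow> ('i \<Rightarrow> 'a \<Rightarrow> real) \<Rightarrow> 'a list \<Rightarrow> 'a \<Rightarrow> real" where
  "move_prob H \<pi> h a = (if is_chance H h then chance_pr H h a else \<pi> (infoset H h) a)"

lemma reach_eq_prod_move_prob:
  "reach H \<pi> z = (\<Prod>k<length z. move_prob H \<pi> (take k z) (z ! k))"
  unfolding reach_def move_prob_def ..

lemma reach_snoc: "reach H \<pi> (h @ [a]) = reach H \<pi> h * move_prob H \<pi> h a"
proof -
  have "(\<Prod>k<length h. move_prob H \<pi> (take k (h @ [a])) ((h @ [a]) ! k)) = reach H \<pi> h"
    unfolding reach_eq_prod_move_prob by (rule prod.cong) (auto simp: nth_append)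
  then show ?thesis unfolding reach_eq_prod_move_prob[of H \<pi> "h @ [a]"]
    by (simp add: prod.lessThan_Suc)
qed

lemma move_prob_distribution:
  assumes "wf_game H" "behavioral H \<pi>" "h \<in> nodes H" "acts H h \<noteq> {}"
  shows "(\<forall>a \<in> acts H h. move_prob H \<pi> h a \<ge> 0) \<and> (\<Sum>a \<in> acts H h. move_prob H \<pi> h a) = 1"
proof (cases "is_chance H h")
  case True
  then have "h \<in> chance_nodes H" using assms(3,4) unfolding chance_nodes_def by simp
  then have "\<forall>a \<in> acts H h. chance_pr H h a \<ge> 0" "(\<Sum>a \<in> acts H h. chance_pr H h a) = 1"
    using assms(1) unfolding wf_game_def by blast+
  with True show ?thesis unfolding move_prob_def by simp
next
  case False
  then have "h \<in> p1_nodes H" using assms(3,4) unfolding p1_nodes_def by simp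
  then have "\<forall>a \<in> acts H h. \<pi> (infoset H h) a \<ge> 0" "(\<Sum>a \<in> acts H h. \<pi> (infoset H h) a) = 1"
    using assms(2) unfolding behavioral_def by blast+
  with False show ?thesis unfolding move_prob_def by simp
qed

lemma reach_nonneg:
  assumes "wf_game H" "behavioral H \<pi>" "h \<in> nodes H"
  shows "reach H \<pi> h \<ge> 0"
  unfolding reach_eq_prod_move_prob
proof (rule prod_nonneg)
  fix k assume "k \<in> {..<length h}"
  then have "take k h \<in> nodes H" "h ! k \<in> acts H (take k h)"
    using take_in_nodes[OF assms(1,3)] nth_in_acts_take[OF assms(1,3)] by auto
  then show "0 \<le> move_prob H \<pi> (take k h) (h ! k)"
    using move_prob_distribution[OF assms(1,2)] by blast
qed

lemma leaves_below_eq_UN_children: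
  assumes "wf_game H" "h \<in> nodes H" "acts H h \<noteq> {}"
  shows "{z \<in> leaves H. prefix h z} = (\<Union>a \<in> acts H h. {z \<in> leaves H. prefix (h @ [a]) z})"
proof (intro equalityI subsetI)
  fix z assume z: "z \<in> {z \<in> leaves H. prefix h z}"
  then obtain w where w: "z = h @ w" unfolding prefix_def by blast
  with z assms(3) obtain a w' where "w = a # w'" unfolding leaves_def by (cases w) auto
  with w have "prefix (h @ [a]) z" by simp
  moreover from this have "a \<in> acts H h"
    using prefix_in_nodes[OF assms(1)] z unfolding leaves_def acts_def by blast
  ultimately show "z \<in> (\<Union>a \<in> acts H h. {z \<in> leaves H. prefix (h @ [a]) z})" using z by blast
qed (auto simp: prefix_def)

lemma sum_reach_leaves_below:
  assumes wf: "wf_game H" and b: "behavioral H \<pi>" and h: "h \<in> nodes H"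
  shows "(\<Sum>z \<in> {z \<in> leaves H. prefix h z}. reach H \<pi> z) = reach H \<pi> h"
proof -
  define D where "D = Max (length ` nodes H)"
  have fin: "finite (nodes H)" using wf unfolding wf_game_def by blast
  then have length_le_D: "length x \<le> D" if "x \<in> nodes H" for x
    using that unfolding D_def by simp
  show ?thesis using h
  proof (induction "D - length h" arbitrary: h rule: less_induct)
    case less
    show ?case
    proof (cases "acts H h = {}")
      case True
      then have "h \<in> leaves H" using less.prems unfolding leaves_def by simp
      then have "{z \<in> leaves H. prefix h z} = {h}"
        using leaf_prefix_eq[OF wf] unfolding leaves_def by blast
      then show ?thesis by simp
    next
      case False
      have children: "(\<Sum>z \<in> {z \<in> leaves H. prefix (h @ [a]) z}. reach H \<pi> z) = reach H \<pi> (h @ [a])"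
        if "a \<in> acts H h" for a
      proof -
        have "h @ [a] \<in> nodes H" using that unfolding acts_def by simp
        with less.hyps length_le_D show ?thesis by fastforce
      qed
      have "(\<Sum>z \<in> {z \<in> leaves H. prefix h z}. reach H \<pi> z)
          = (\<Sum>a \<in> acts H h. \<Sum>z \<in> {z \<in> leaves H. prefix (h @ [a]) z}. reach H \<pi> z)"
        unfolding leaves_below_eq_UN_children[OF wf less.prems False]
        using finite_leaves[OF wf]
        by (intro sum.UNION_disjoint finite_acts[OF wf]) (auto simp: prefix_def)
      also have "\<dots> = reach H \<pi> h * (\<Sum>a \<in> acts H h. move_prob H \<pi> h a)"
        using children by (simp add: reach_snoc sum_distrib_left)
      also have "\<dots> = reach H \<pi> h"
        using move_prob_distribution[OF wf b less.prems False] by simp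
      finally show ?thesis .
    qed
  qed
qed

lemma sum_reach_leaves:
  assumes "wf_game H" "behavioral H \<pi>"
  shows "(\<Sum>z \<in> leaves H. reach H \<pi> z) = 1"
  using sum_reach_leaves_below[OF assms, of "[]"] assms(1)
  unfolding wf_game_def by (simp add: reach_def)

lemma U1_le_Max_util:
  assumes wf: "wf_game H" and b: "behavioral H \<pi>"
  shows "U1 H \<pi> \<le> Max (util H ` leaves H)"
proof -
  let ?M = "Max (util H ` leaves H)"
  have "U1 H \<pi> \<le> (\<Sum>z \<in> leaves H. reach H \<pi> z * ?M)"
    unfolding U1_def
  proof (rule sum_mono, rule mult_left_mono)
    fix z assume z: "z \<in> leaves H"
    show "util H z \<le> ?M" using finite_leaves[OF wf] z by simp
    show "reach H \<pi> z \<ge> 0" using reach_nonneg[OF wf b] z unfolding leaves_def by blast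
  qed
  also have "\<dots> = ?M"
    by (simp add: sum_distrib_right[symmetric] sum_reach_leaves[OF wf b])
  finally show ?thesis .
qed

lemma U1_eq_util_if_reach_eq_1:
  assumes wf: "wf_game H" and b: "behavioral H \<pi>"
    and z0: "z0 \<in> leaves H" and reach_z0: "reach H \<pi> z0 = 1"
  shows "U1 H \<pi> = util H z0"
proof -
  have fin: "finite (leaves H - {z0})" using finite_leaves[OF wf] by simp
  have nonneg: "\<forall>z \<in> leaves H - {z0}. reach H \<pi> z \<ge> 0"
    using reach_nonneg[OF wf b] unfolding leaves_def by blast
  have "(\<Sum>z \<in> leaves H - {z0}. reach H \<pi> z) = 0"
    using sum_reach_leaves[OF wf b] reach_z0 sum.remove[OF finite_leaves[OF wf] z0, of "reach H \<pi>"]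
    by simp
  then have "\<forall>z \<in> leaves H - {z0}. reach H \<pi> z = 0"
    using sum_nonneg_eq_0_iff[OF fin] nonneg by blast
  moreover have "U1 H \<pi> = reach H \<pi> z0 * util H z0 + (\<Sum>z \<in> leaves H - {z0}. reach H \<pi> z * util H z)"
    unfolding U1_def by (rule sum.remove[OF finite_leaves[OF wf] z0])
  ultimately show ?thesis using reach_z0 by simp
qed

definition deterministic :: "('i \<Rightarrow> 'a) \<Rightarrow> 'i \<Rightarrow> 'a \<Rightarrow> real" where
  "deterministic \<sigma> I b = (if b = \<sigma> I then 1 else 0)"

lemma pure_deterministic:
  assumes "wf_game H" "\<forall>h \<in> p1_nodes H. \<sigma> (infoset H h) \<in> acts H h"
  shows "pure H (deterministic \<sigma>)"
  using assms finite_acts[OF assms(1)]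
  unfolding pure_def behavioral_def deterministic_def by auto

lemma reach_deterministic_eq_1:
  assumes "wf_game H" "no_chance H" "z \<in> nodes H"
    and "\<forall>k < length z. \<sigma> (infoset H (take k z)) = z ! k"
  shows "reach H (deterministic \<sigma>) z = 1"
  using assms take_in_p1_nodes[OF assms(1-3)]
  unfolding reach_def deterministic_def p1_nodes_def by (intro prod.neutral) auto

(* Off the path the choice is arbitrary but legal; on the path it is well defined because,
   without absentmindedness, the path meets each infoset at most once. *)
lemma choice_following_path:
  assumes wf: "wf_game H" and na: "\<not> absentminded H" and z: "z \<in> nodes H"
  obtains \<sigma> where "\<forall>h \<in> p1_nodes H. \<sigma> (infoset H h) \<in> acts H h"
    and "\<forall>k < length z. take k z \<in> p1_nodes H \<longrightarrow> \<sigma> (infoset H (take k z)) = z ! k"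
proof
  let ?on_path = "\<lambda>I k. k < length z \<and> take k z \<in> p1_nodes H \<and> infoset H (take k z) = I"
  define \<sigma> where "\<sigma> I = (if \<exists>k. ?on_path I k then z ! (SOME k. ?on_path I k)
                         else (SOME a. \<exists>h \<in> p1_nodes H. infoset H h = I \<and> a \<in> acts H h))" for I
  have unique: "k = l" if "?on_path I k" "?on_path I l" for I k l
    using na z that unfolding absentminded_def by (metis linorder_neqE_nat)
  have on_path: "\<sigma> (infoset H (take k z)) = z ! k"
    if "k < length z" "take k z \<in> p1_nodes H" for k
  proof -
    have k: "?on_path (infoset H (take k z)) k" using that by simp
    then have "(SOME l. ?on_path (infoset H (take k z)) l) = k"
      by (rule some_equality) (use unique k in blast)
    with k show ?thesis unfolding \<sigma>_def by auto
  qed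
  then show "\<forall>k < length z. take k z \<in> p1_nodes H \<longrightarrow> \<sigma> (infoset H (take k z)) = z ! k"
    by blast
  have same_acts: "acts H h = acts H h'"
    if "h \<in> p1_nodes H" "h' \<in> p1_nodes H" "infoset H h = infoset H h'" for h h'
    using wf that unfolding wf_game_def by blast
  show "\<forall>h \<in> p1_nodes H. \<sigma> (infoset H h) \<in> acts H h"
  proof
    fix h assume h: "h \<in> p1_nodes H"
    show "\<sigma> (infoset H h) \<in> acts H h"
    proof (cases "\<exists>k. ?on_path (infoset H h) k")
      case True
      then obtain k where k: "?on_path (infoset H h) k" by blast
      then show ?thesis
        using on_path[of k] nth_in_acts_take[OF wf z, of k] same_acts[OF _ h] by metis
    next
      case False
      have "\<exists>a. \<exists>h' \<in> p1_nodes H. infoset H h' = infoset H h \<and> a \<in> acts H h'"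
        using h unfolding p1_nodes_def by blast
      from someI_ex[OF this] False show ?thesis
        unfolding \<sigma>_def using same_acts[OF _ h] by auto
    qed
  qed
qed

lemma pure_strategy_reaching_leaf:
  assumes wf: "wf_game H" and nc: "no_chance H" and na: "\<not> absentminded H"
    and z0: "z0 \<in> leaves H"
  obtains \<pi> where "pure H \<pi>" "U1 H \<pi> = util H z0"
proof -
  have z0_node: "z0 \<in> nodes H" using z0 unfolding leaves_def by blast
  obtain \<sigma> where legal: "\<forall>h \<in> p1_nodes H. \<sigma> (infoset H h) \<in> acts H h"
    and follows: "\<forall>k < length z0. take k z0 \<in> p1_nodes H \<longrightarrow> \<sigma> (infoset H (take k z0)) = z0 ! k"
    using choice_following_path[OF wf na z0_node] by blast
  have "pure H (deterministic \<sigma>)" using pure_deterministic[OF wf legal] .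
  moreover have "reach H (deterministic \<sigma>) z0 = 1"
    using reach_deterministic_eq_1[OF wf nc z0_node] follows take_in_p1_nodes[OF wf nc z0_node]
    by blast
  ultimately show ?thesis
    using that U1_eq_util_if_reach_eq_1[OF wf _ z0] unfolding pure_def by blast
qed

lemma opt_val_eq_U1_if_optimal:
  assumes "optimal H \<pi>"
  shows "opt_val H = U1 H \<pi>"
  using assms unfolding opt_val_def optimal_def by (intro cSup_eq_maximum) blast+

lemma pure_optimal_attaining_Max_util:
  assumes wf: "wf_game H" and nc: "no_chance H" and na: "\<not> absentminded H"
  obtains \<pi> where "pure H \<pi>" "optimal H \<pi>" "U1 H \<pi> = Max (util H ` leaves H)"
proof -
  let ?M = "Max (util H ` leaves H)"
  have "?M \<in> util H ` leaves H"
    using finite_leaves[OF wf] leaves_nonempty[OF wf] by (intro Max_in) auto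
  then obtain z0 where z0: "z0 \<in> leaves H" "util H z0 = ?M" by auto
  then obtain \<pi> where \<pi>: "pure H \<pi>" "U1 H \<pi> = ?M"
    using pure_strategy_reaching_leaf[OF wf nc na z0(1)] by metis
  then have "optimal H \<pi>"
    unfolding optimal_def pure_def using U1_le_Max_util[OF wf] by simp
  with \<pi> that show ?thesis by blast
qed

lemma opt_val_eq_Max_util:
  assumes "wf_game H" "no_chance H" "\<not> absentminded H"
  shows "opt_val H = Max (util H ` leaves H)"
  using pure_optimal_attaining_Max_util[OF assms] opt_val_eq_U1_if_optimal by metis

lemma acts_pr1 [simp]: "acts (pr1 G) = acts G"
  unfolding acts_def pr1_def by simp

lemma pr1_simps [simp]:
  "nodes (pr1 G) = nodes G" "util (pr1 G) = util G" "is_chance (pr1 G) = is_chance G"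
  "chance_pr (pr1 G) = chance_pr G"
  by (simp_all add: pr1_def)

lemma pr1_same_infoset:
  "infoset (pr1 G) h = infoset (pr1 G) h' \<Longrightarrow> infoset G h = infoset G h'"
  by (simp add: pr1_def)

lemma leaves_pr1 [simp]: "leaves (pr1 G) = leaves G"
  unfolding leaves_def by simp

lemma p1_nodes_pr1 [simp]: "p1_nodes (pr1 G) = p1_nodes G"
  unfolding p1_nodes_def by simp

lemma chance_nodes_pr1 [simp]: "chance_nodes (pr1 G) = chance_nodes G"
  unfolding chance_nodes_def by simp

lemma wf_game_pr1: "wf_game G \<Longrightarrow> wf_game (pr1 G)"
  unfolding wf_game_def leaves_pr1 p1_nodes_pr1 chance_nodes_pr1 acts_pr1 pr1_simps
  using pr1_same_infoset by blast

lemma no_chance_pr1: "no_chance G \<Longrightarrow> no_chance (pr1 G)"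
  unfolding no_chance_def by simp

lemma absentminded_pr1D: "absentminded (pr1 G) \<Longrightarrow> absentminded G"
  unfolding absentminded_def p1_nodes_pr1 pr1_simps using pr1_same_infoset by blast

theorem proposition6:
  fixes G :: "('a, 'i) efg"
  assumes "wf_game G" and "no_chance G" and "\<not> absentminded G"
  shows "opt_val (pr1 G) = opt_val G \<and> (opt_val G \<noteq> 0 \<longrightarrow> VoR_opt G = 1) \<and>
         (\<exists>\<pi>. pure G \<pi> \<and> optimal G \<pi>) \<and>
         (\<exists>\<pi>. pure (pr1 G) \<pi> \<and> optimal (pr1 G) \<pi>)"
proof -
  have pr1_G: "wf_game (pr1 G)" "no_chance (pr1 G)" "\<not> absentminded (pr1 G)"
    using assms wf_game_pr1 no_chance_pr1 absentminded_pr1D by blast+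
  have "opt_val (pr1 G) = opt_val G"
    using opt_val_eq_Max_util[OF pr1_G] opt_val_eq_Max_util[OF assms] by simp
  moreover obtain \<pi> where "pure G \<pi>" "optimal G \<pi>"
    using pure_optimal_attaining_Max_util[OF assms] by blast
  moreover obtain \<pi>' where "pure (pr1 G) \<pi>'" "optimal (pr1 G) \<pi>'"
    using pure_optimal_attaining_Max_util[OF pr1_G] by blast
  ultimately show ?thesis unfolding VoR_opt_def by auto
qed

end
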